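(* Let $\mathcal{D}$ be a DAG on vertex set $[p]$, let $\mathcal{V} \subseteq [p]$, and let $k \in \mathcal{V}$. If $R_{\mathcal{D}}(\mathcal{V}, k) > 0$, then $k \in \mathrm{Maximal}(\mathcal{D}, \mathcal{V})$, i.e. no (proper) descendant of $k$ in $\mathcal{D}$ lies in $\mathcal{V}$.
   Context: For a DAG $\mathcal{D}$ on $[p]$ and $i, j \in [p]$, $S \subseteq [p]\setminus\{i,j\}$, write $i \not\perp\!\!\!\perp_{\mathcal{D}} j \mid S$ if $i$ and $j$ are d-connected given $S$ in $\mathcal{D}$. For $\mathcal{V} \subseteq [p]$, the moral subgraph $\mathcal{M}_{\mathcal{V}}(\mathcal{D})$ is the undirected graph with vertex set $\mathcal{V}$ and edge set $\{ i - j : i \neq j \in \mathcal{V},\ i \not\perp\!\!\!\perp_{\mathcal{D}} j \mid \mathcal{V}\setminus\{i,j\}\}$. $\mathcal{G}[W]$ denotes the induced subgraph of an undirected graph $\mathcal{G}$ on $W$, and $\mathcal{V}\setminus k := \mathcal{V}\setminus\{k\}$. The removed edge set is $\mathcal{R}_{\mathcal{D}}(\mathcal{V}, k) = \mathcal{M}_{\mathcal{V}}(\mathcal{D})[\mathcal{V}\setminus k] \setminus \mathcal{M}_{\mathcal{V}\setminus k}(\mathcal{D})$ (edges of the induced subgraph of $\mathcal{M}_{\mathcal{V}}(\mathcal{D})$ on $\mathcal{V}\setminus k$ that are absent from $\mathcal{M}_{\mathcal{V}\setminus k}(\mathcal{D})$), and the removal score is $R_{\mathcal{D}}(\mathcal{V},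 k) = |\mathcal{R}_{\mathcal{D}}(\mathcal{V}, k)|$. With $\mathrm{de}_{\mathcal{D}}(v)$ the set of descendants of $v$ in $\mathcal{D}$ (nodes reachable from $v$ by a nonempty directed path, excluding $v$ itself), $\mathrm{Maximal}(\mathcal{D}, \mathcal{V}) := \{ v \in \mathcal{V} : \mathrm{de}_{\mathcal{D}}(v) \cap \mathcal{V} = \emptyset \}$. *)

theory Defs
  imports Main
begin

text \<open>A DAG on vertex set [p] = {1..p} is an edge relation E (pairs (u,v) meaning u -> v)
  contained in {1..p} x {1..p} and acyclic.\<close>

definition is_dag :: "nat \<Rightarrow> (nat \<times> nat) set \<Rightarrow> bool" where
  "is_dag p E \<longleftrightarrow> E \<subseteq> {1..p} \<times> {1..p} \<and> acyclic E"

definition adj :: "(nat \<times> nat) set \<Rightarrow> nat \<Rightarrow> nat \<Rightarrow> bool" where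
  "adj E u v \<longleftrightarrow> (u, v) \<in> E \<or> (v, u) \<in> E"

definition collider :: "(nat \<times> nat) set \<Rightarrow> nat list \<Rightarrow> nat \<Rightarrow> bool" where
  "collider E ps m \<longleftrightarrow> (ps ! (m - 1), ps ! m) \<in> E \<and> (ps ! (m + 1), ps ! m) \<in> E"

definition d_connected :: "(nat \<times> nat) set \<Rightarrow> nat \<Rightarrow> nat \<Rightarrow> nat set \<Rightarrow> bool" where
  "d_connected E i j S \<longleftrightarrow>
     (\<exists>ps. length ps \<ge> 2 \<and> hd ps = i \<and> last ps = j \<and> distinct ps \<and>
       (\<forall>m. m + 1 < length ps \<longrightarrow> adj E (ps ! m) (ps ! (m + 1))) \<and>
       (\<forall>m. 0 < m \<and> m + 1 < length ps \<longrightarrow>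
          (if collider E ps m then (\<exists>w \<in> S. (ps ! m, w) \<in> E\<^sup>*)
           else ps ! m \<notin> S)))"

text \<open>Edge set of the moral subgraph M_V(D), undirected edges as 2-element sets.\<close>
definition moral_edges :: "(nat \<times> nat) set \<Rightarrow> nat set \<Rightarrow> nat set set" where
  "moral_edges E V = {{i, j} | i j. i \<in> V \<and> j \<in> V \<and> i \<noteq> j \<and> d_connected E i j (V - {i, j})}"

definition induced_edges :: "nat set set \<Rightarrow> nat set \<Rightarrow> nat set set" where
  "induced_edges F W = {e \<in> F. e \<subseteq> W}"

definition removed_edges :: "(nat \<times> nat) set \<Rightarrow> nat set \<Rightarrow> nat \<Rightarrow> nat set set" where
  "removed_edges E V k = induced_edges (moral_edges E V) (V - {k}) - moral_edges E (V - {k})"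

definition removal_score :: "(nat \<times> nat) set \<Rightarrow> nat set \<Rightarrow> nat \<Rightarrow> nat" where
  "removal_score E V k = card (removed_edges E V k)"

definition descendants :: "(nat \<times> nat) set \<Rightarrow> nat \<Rightarrow> nat set" where
  "descendants E v = {w. (v, w) \<in> E\<^sup>+}"

definition Maximal :: "(nat \<times> nat) set \<Rightarrow> nat set \<Rightarrow> nat set" where
  "Maximal E V = {v \<in> V. descendants E v \<inter> V = {}}"

end

theory Submission
  imports Defs
begin

text \<open>
  If k has a descendant w \<in> V, every path that d-connects i and
  j given V - {i, j} can be turned into one that d-connects them given
  V - {k, i, j}. Non-colliders stay unblocked, and a collider that was activated only
  through k still lies above w: either w \<notin> {i, j} keeps it active, or it
  is an ancestor of i or j and the trail is rerouted along that directed path.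
  Rerouting yields walks rather than paths, so reachability along active trails is tracked
  Bayes-ball style, and an active walk between distinct endpoints is shortened to an active path
  by cutting out the loop between two visits of the same vertex; acyclicity keeps the junction
  active.
\<close>

lemma acyclic_edge_asym: "acyclic E \<Longrightarrow> (a, b) \<in> E \<Longrightarrow> (b, a) \<notin> E"
  by (meson acyclic_def r_into_trancl trancl_into_trancl)

definition active_walk :: "(nat \<times> nat) set \<Rightarrow> nat set \<Rightarrow> (nat \<Rightarrow> nat) \<Rightarrow> nat \<Rightarrow> bool" where
  "active_walk E Z f n \<longleftrightarrow> 2 \<le> n \<and> (\<forall>m. m + 1 < n \<longrightarrow> adj E (f m) (f (m + 1))) \<and>
     (\<forall>m. 0 < m \<and> m + 1 < n \<longrightarrow>
        (if (f (m - 1), f m) \<in> E \<and> (f (m + 1), f m) \<in> E then (\<exists>w\<in>Z. (f m, w) \<in> E\<^sup>*)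
         else f m \<notin> Z))"

lemma active_walk_length: "active_walk E Z f n \<Longrightarrow> 2 \<le> n"
  unfolding active_walk_def by blast

lemma active_walk_adj: "active_walk E Z f n \<Longrightarrow> m + 1 < n \<Longrightarrow> adj E (f m) (f (m + 1))"
  unfolding active_walk_def by blast

lemma active_walk_active:
  "active_walk E Z f n \<Longrightarrow> 0 < m \<Longrightarrow> m + 1 < n \<Longrightarrow>
    if (f (m - 1), f m) \<in> E \<and> (f (m + 1), f m) \<in> E then (\<exists>w\<in>Z. (f m, w) \<in> E\<^sup>*) else f m \<notin> Z"
  unfolding active_walk_def by blast

lemma active_walk_snoc:
  assumes "active_walk E Z f n" "f (n - 1) = v" "adj E v u"
    "if (f (n - 2), v) \<in> E \<and> (u, v) \<in> E then (\<exists>w\<in>Z. (v, w) \<in> E\<^sup>*) else v \<notin> Z"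
  shows "\<exists>g. active_walk E Z g (Suc n) \<and> g 0 = f 0 \<and> g n = u \<and> g (n - 1) = v"
proof -
  have n2: "2 \<le> n" using active_walk_length[OF assms(1)] .
  hence ends: "(f(n := u)) 0 = f 0" "(f(n := u)) n = u" "(f(n := u)) (n - 1) = v"
    using assms(2) by auto
  have "adj E ((f(n := u)) m) ((f(n := u)) (m + 1))" if "m + 1 < Suc n" for m
  proof (cases "m + 1 < n")
    case True thus ?thesis using active_walk_adj[OF assms(1)] by simp
  next
    case False
    hence "m = n - 1" "m \<noteq> n" "m + 1 = n" using that n2 by auto
    thus ?thesis using assms(2,3) by simp
  qed
  moreover have "if ((f(n := u)) (m - 1), (f(n := u)) m) \<in> E \<and> ((f(n := u)) (m + 1), (f(n := u)) m) \<in> E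
      then (\<exists>w\<in>Z. ((f(n := u)) m, w) \<in> E\<^sup>*) else (f(n := u)) m \<notin> Z"
    if m: "0 < m" "m + 1 < Suc n" for m
  proof (cases "m + 1 < n")
    case True
    hence "m - 1 \<noteq> n" "m \<noteq> n" "m + 1 \<noteq> n" by auto
    thus ?thesis using active_walk_active[OF assms(1) m(1) True] by simp
  next
    case False
    hence "m = n - 1" "m - 1 = n - 2" "m - 1 \<noteq> n" "m \<noteq> n" "m + 1 = n" using m n2 by auto
    thus ?thesis using assms(2,4) n2 by auto
  qed
  moreover have "2 \<le> Suc n" using n2 by simp
  ultimately have "active_walk E Z (f(n := u)) (Suc n)" unfolding active_walk_def by blast
  with ends show ?thesis by blast
qed

text \<open>Bayes-ball reachability from i along active trails given Z; the flag
  records whether the last edge of the trail points into v.\<close>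

inductive active_reach :: "(nat \<times> nat) set \<Rightarrow> nat set \<Rightarrow> nat \<Rightarrow> nat \<Rightarrow> bool \<Rightarrow> bool"
  for E Z i where
  out_edge: "(i, v) \<in> E \<Longrightarrow> active_reach E Z i v True"
| in_edge: "(v, i) \<in> E \<Longrightarrow> active_reach E Z i v False"
| collider: "active_reach E Z i v True \<Longrightarrow> \<exists>w\<in>Z. (v, w) \<in> E\<^sup>* \<Longrightarrow> (u, v) \<in> E \<Longrightarrow>
    active_reach E Z i u False"
| forward: "active_reach E Z i v d \<Longrightarrow> v \<notin> Z \<Longrightarrow> (v, u) \<in> E \<Longrightarrow> active_reach E Z i u True"
| backward: "active_reach E Z i v False \<Longrightarrow> v \<notin> Z \<Longrightarrow> (u, v) \<in> E \<Longrightarrow>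
    active_reach E Z i u False"

lemma active_walk_of_active_reach:
  assumes acyc: "acyclic E"
  shows "active_reach E Z i v d \<Longrightarrow> \<exists>f n. active_walk E Z f n \<and> f 0 = i \<and> f (n - 1) = v \<and>
      (if d then (f (n - 2), v) \<in> E else (v, f (n - 2)) \<in> E)"
proof (induction rule: active_reach.induct)
  case (out_edge v)
  let ?f = "\<lambda>x::nat. if x = 0 then i else v"
  have "active_walk E Z ?f 2" using out_edge by (auto simp: active_walk_def adj_def)
  thus ?case using out_edge by (intro exI[of _ ?f] exI[of _ 2]) auto
next
  case (in_edge v)
  let ?f = "\<lambda>x::nat. if x = 0 then i else v"
  have "active_walk E Z ?f 2" using in_edge by (auto simp: active_walk_def adj_def)
  thus ?case using in_edge by (intro exI[of _ ?f] exI[of _ 2]) auto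
next
  case (collider v u)
  then obtain f n where f: "active_walk E Z f n" "f 0 = i" "f (n - 1) = v" "(f (n - 2), v) \<in> E"
    by auto
  have "\<exists>g. active_walk E Z g (Suc n) \<and> g 0 = f 0 \<and> g n = u \<and> g (n - 1) = v"
    by (rule active_walk_snoc[OF f(1) f(3)]) (use collider f in \<open>auto simp: adj_def\<close>)
  then obtain g where "active_walk E Z g (Suc n)" "g 0 = i" "g n = u" "g (n - 1) = v"
    using f by blast
  thus ?case using collider f by (intro exI[of _ g] exI[of _ "Suc n"]) (simp add: numeral_2_eq_2)
next
  case (forward v d u)
  then obtain f n where f: "active_walk E Z f n" "f 0 = i" "f (n - 1) = v" by auto
  have "(u, v) \<notin> E" using acyclic_edge_asym[OF acyc] forward by blast
  hence "\<exists>g. active_walk E Z g (Suc n) \<and> g 0 = f 0 \<and> g n = u \<and> g (n - 1) = v"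
    by (intro active_walk_snoc[OF f(1) f(3)]) (use forward in \<open>auto simp: adj_def\<close>)
  then obtain g where "active_walk E Z g (Suc n)" "g 0 = i" "g n = u" "g (n - 1) = v"
    using f by blast
  thus ?case using forward f by (intro exI[of _ g] exI[of _ "Suc n"]) (simp add: numeral_2_eq_2)
next
  case (backward v u)
  then obtain f n where f: "active_walk E Z f n" "f 0 = i" "f (n - 1) = v" "(v, f (n - 2)) \<in> E"
    by auto
  have "(f (n - 2), v) \<notin> E" using acyclic_edge_asym[OF acyc f(4)] .
  hence "\<exists>g. active_walk E Z g (Suc n) \<and> g 0 = f 0 \<and> g n = u \<and> g (n - 1) = v"
    by (intro active_walk_snoc[OF f(1) f(3)]) (use backward in \<open>auto simp: adj_def\<close>)
  then obtain g where "active_walk E Z g (Suc n)" "g 0 = i" "g n = u" "g (n - 1) = v"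
    using f by blast
  thus ?case using backward f by (intro exI[of _ g] exI[of _ "Suc n"]) (simp add: numeral_2_eq_2)
qed

lemma active_walk_forward:
  assumes walk: "active_walk E Z f n" and "0 < x" and "(f (x - 1), f x) \<in> E"
  shows "x \<le> y \<Longrightarrow> y < n \<Longrightarrow>
    (\<exists>w\<in>Z. (f x, w) \<in> E\<^sup>*) \<or> ((f x, f y) \<in> E\<^sup>* \<and> (f (y - 1), f y) \<in> E)"
proof (induction y rule: dec_induct)
  case base
  then show ?case using assms by simp
next
  case (step y)
  have y: "0 < y" "y + 1 < n" using step \<open>0 < x\<close> by auto
  show ?case
  proof (cases "\<exists>w\<in>Z. (f x, w) \<in> E\<^sup>*")
    case False
    with step have down: "(f x, f y) \<in> E\<^sup>*" "(f (y - 1), f y) \<in> E" by auto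
    note active = active_walk_active[OF walk y] and adj = active_walk_adj[OF walk y(2)]
    show ?thesis
    proof (cases "(f (y + 1), f y) \<in> E")
      case True
      with active down obtain w where "w \<in> Z" "(f y, w) \<in> E\<^sup>*" by auto
      with down(1) False show ?thesis by (meson rtrancl_trans)
    next
      case False
      with adj have "(f y, f (Suc y)) \<in> E" by (simp add: adj_def)
      with down(1) show ?thesis by (simp add: rtrancl.rtrancl_into_rtrancl)
    qed
  qed simp
qed

text \<open>Cutting out the loop between positions p and q of an active walk makes
  f p a collider only if it already had a descendant in Z: otherwise the walk
  would run down from f p back to f q = f p, contradicting acyclicity.\<close>

lemma active_walk_junction:
  assumes acyc: "acyclic E" and walk: "active_walk E Z f n"
    and pq: "0 < p" "p < q" "q + 1 < n" "f p = f q"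
  shows "if (f (p - 1), f p) \<in> E \<and> (f (q + 1), f p) \<in> E then (\<exists>w\<in>Z. (f p, w) \<in> E\<^sup>*)
    else f p \<notin> Z"
proof -
  note adjf = active_walk_adj[OF walk] and active = active_walk_active[OF walk]
  show ?thesis
  proof (cases "(f (p - 1), f p) \<in> E \<and> (f (q + 1), f p) \<in> E")
    case collider: True
    have "\<exists>w\<in>Z. (f p, w) \<in> E\<^sup>*"
    proof (cases "(f (p + 1), f p) \<in> E")
      case True
      thus ?thesis using active[of p] pq collider by simp
    next
      case False
      with adjf[of p] pq have down: "(f p, f (p + 1)) \<in> E" by (simp add: adj_def)
      have "(\<exists>w\<in>Z. (f (p + 1), w) \<in> E\<^sup>*) \<or> (f (p + 1), f q) \<in> E\<^sup>*"
        using active_walk_forward[OF walk, of "p + 1" q] down pq by auto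
      thus ?thesis
      proof
        assume "(f (p + 1), f q) \<in> E\<^sup>*"
        hence "(f p, f p) \<in> E\<^sup>+" using down pq(4) by (metis rtrancl_into_trancl2)
        thus ?thesis using acyc by (simp add: acyclic_def)
      qed (use down in \<open>meson converse_rtrancl_into_rtrancl\<close>)
    qed
    thus ?thesis using collider by simp
  next
    case False
    have "f p \<notin> Z"
    proof (cases "(f (p - 1), f p) \<in> E")
      case True
      hence "(f (q + 1), f q) \<notin> E" using False pq by simp
      thus ?thesis using active[of q] pq by simp
    qed (use active[of p] pq in simp)
    thus ?thesis using False by auto
  qed
qed

lemma active_walk_splice:
  assumes acyc: "acyclic E" and walk: "active_walk E Z f n"
    and pq: "p < q" "q < n" "f p = f q" and ends: "f 0 \<noteq> f (n - 1)"
  shows "active_walk E Z (\<lambda>x. if x \<le> p then f x else f (x + (q - p))) (n - (q - p))"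
    (is "active_walk E Z ?g ?m")
proof -
  have low: "\<And>x. x \<le> p \<Longrightarrow> ?g x = f x" and high: "\<And>x. p \<le> x \<Longrightarrow> ?g x = f (x + (q - p))"
    using pq by auto
  have m2: "2 \<le> ?m"
  proof (rule ccontr)
    assume "\<not> 2 \<le> ?m"
    hence "p = 0" "q = n - 1" using pq by auto
    thus False using ends pq by simp
  qed
  note adjf = active_walk_adj[OF walk] and active = active_walk_active[OF walk]
  have "adj E (?g x) (?g (x + 1))" if "x + 1 < ?m" for x
  proof (cases "x < p")
    case True thus ?thesis using adjf pq by simp
  next
    case False
    thus ?thesis using adjf[of "x + (q - p)"] high[of x] high[of "x + 1"] that by simp
  qed
  moreover have "if (?g (x - 1), ?g x) \<in> E \<and> (?g (x + 1), ?g x) \<in> E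
      then (\<exists>w\<in>Z. (?g x, w) \<in> E\<^sup>*) else ?g x \<notin> Z" if x: "0 < x" "x + 1 < ?m" for x
  proof (cases x p rule: linorder_cases)
    case less
    thus ?thesis using active[of x] pq x by simp
  next
    case greater
    have "?g (x - 1) = f (x + (q - p) - 1)" using greater pq by (cases "x = p + 1") auto
    moreover have "?g x = f (x + (q - p))" "?g (x + 1) = f (x + (q - p) + 1)"
      using high greater by auto
    moreover have "x + (q - p) + 1 < n" using x by linarith
    ultimately show ?thesis using active[of "x + (q - p)"] x by simp
  next
    case equal
    have "?g (x - 1) = f (p - 1)" "?g x = f p" "?g (x + 1) = f (q + 1)"
      using equal low high[of "p + 1"] pq by auto
    moreover have "0 < p" "q + 1 < n" using x equal pq by linarith+
    ultimately show ?thesis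
      using active_walk_junction[OF acyc walk \<open>0 < p\<close> pq(1) \<open>q + 1 < n\<close> pq(3)] by simp
  qed
  ultimately show ?thesis unfolding active_walk_def using m2 by blast
qed

lemma active_walk_shorten_inj:
  assumes acyc: "acyclic E"
  shows "active_walk E Z f n \<Longrightarrow> f 0 = i \<Longrightarrow> f (n - 1) = j \<Longrightarrow> i \<noteq> j \<Longrightarrow>
    \<exists>g m. active_walk E Z g m \<and> g 0 = i \<and> g (m - 1) = j \<and> inj_on g {..<m}"
proof (induction n arbitrary: f rule: less_induct)
  case (less n f)
  show ?case
  proof (cases "inj_on f {..<n}")
    case False
    then obtain p q where pq: "p < q" "q < n" "f p = f q"
      by (auto simp: inj_on_def) (metis linorder_neqE_nat)
    let ?g = "\<lambda>x. if x \<le> p then f x else f (x + (q - p))"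
    have "active_walk E Z ?g (n - (q - p))"
      using active_walk_splice[OF acyc less.prems(1) pq] less.prems by simp
    moreover have "?g 0 = i" using less.prems by simp
    moreover have "?g (n - (q - p) - 1) = j"
      using less.prems pq by (cases "q = n - 1") auto
    ultimately show ?thesis using less.IH[of "n - (q - p)" ?g] less.prems(4) pq by auto
  qed (use less.prems in blast)
qed

lemma d_connected_iff_active_walk:
  "d_connected E i j Z \<longleftrightarrow>
    (\<exists>f n. active_walk E Z f n \<and> inj_on f {..<n} \<and> f 0 = i \<and> f (n - 1) = j)"
proof
  assume "d_connected E i j Z"
  then obtain ps where ps: "length ps \<ge> 2" "hd ps = i" "last ps = j" "distinct ps"
    "\<forall>m. m + 1 < length ps \<longrightarrow> adj E (ps ! m) (ps ! (m + 1))"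
    "\<forall>m. 0 < m \<and> m + 1 < length ps \<longrightarrow>
        (if collider E ps m then (\<exists>w \<in> Z. (ps ! m, w) \<in> E\<^sup>*) else ps ! m \<notin> Z)"
    unfolding d_connected_def by blast
  have "ps \<noteq> []" using ps(1) by auto
  hence "ps ! 0 = i" "ps ! (length ps - 1) = j"
    using ps(2,3) by (simp_all add: hd_conv_nth last_conv_nth)
  moreover have "active_walk E Z (nth ps) (length ps)"
    using ps(1,5,6) unfolding active_walk_def collider_def by simp
  moreover have "inj_on (nth ps) {..<length ps}" using ps(4) by (simp add: inj_on_nth)
  ultimately show "\<exists>f n. active_walk E Z f n \<and> inj_on f {..<n} \<and> f 0 = i \<and> f (n - 1) = j"
    by blast
next
  assume "\<exists>f n. active_walk E Z f n \<and> inj_on f {..<n} \<and> f 0 = i \<and> f (n - 1) = j"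
  then obtain f n where f: "active_walk E Z f n" "inj_on f {..<n}" "f 0 = i" "f (n - 1) = j"
    by blast
  let ?ps = "map f [0..<n]"
  have n2: "2 \<le> n" using active_walk_length[OF f(1)] .
  have "length ?ps \<ge> 2" "hd ?ps = i" "last ?ps = j" "distinct ?ps"
    using n2 f(2-4) by (simp_all add: hd_map hd_upt last_map distinct_map atLeast0LessThan)
  moreover have "\<forall>x. x + 1 < length ?ps \<longrightarrow> adj E (?ps ! x) (?ps ! (x + 1))"
    using active_walk_adj[OF f(1)] by simp
  moreover have "if collider E ?ps x then (\<exists>w \<in> Z. (?ps ! x, w) \<in> E\<^sup>*) else ?ps ! x \<notin> Z"
    if x: "0 < x" "x + 1 < length ?ps" for x
  proof -
    have "?ps ! (x - 1) = f (x - 1)" "?ps ! x = f x" "?ps ! (x + 1) = f (x + 1)" using x by auto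
    thus ?thesis using active_walk_active[OF f(1), of x] x unfolding collider_def by simp
  qed
  ultimately show "d_connected E i j Z" unfolding d_connected_def by blast
qed

lemma d_connected_of_active_reach:
  assumes "acyclic E" "active_reach E Z i j d" "i \<noteq> j"
  shows "d_connected E i j Z"
proof -
  obtain f n where "active_walk E Z f n" "f 0 = i" "f (n - 1) = j"
    using active_walk_of_active_reach[OF assms(1,2)] by blast
  thus ?thesis
    using active_walk_shorten_inj[OF assms(1)] assms(3) d_connected_iff_active_walk by metis
qed

lemma active_reach_ancestor:
  assumes "(v, i) \<in> E\<^sup>+"
  shows "\<forall>x. (v, x) \<in> E\<^sup>* \<longrightarrow> x \<notin> Z \<Longrightarrow> active_reach E Z i v False"
  using assms
proof (induction rule: converse_trancl_induct)
  case (base y)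
  then show ?case by (simp add: active_reach.in_edge)
next
  case (step y z)
  have "\<forall>x. (z, x) \<in> E\<^sup>* \<longrightarrow> x \<notin> Z" using step by (meson converse_rtrancl_into_rtrancl)
  with step show ?case by (blast intro: active_reach.backward)
qed

lemma active_reach_descendant:
  assumes "(v, j) \<in> E\<^sup>+"
  shows "\<forall>x. (v, x) \<in> E\<^sup>* \<longrightarrow> x \<notin> Z \<Longrightarrow> active_reach E Z i v d \<Longrightarrow> active_reach E Z i j True"
  using assms
proof (induction rule: trancl_induct)
  case (base y)
  then show ?case by (auto intro: active_reach.forward)
next
  case (step y z)
  have "y \<notin> Z" using step by (meson trancl_into_rtrancl)
  with step show ?case by (blast intro: active_reach.forward)
qed

text \<open>A collider that loses its activating descendant when S shrinks to Z lies above an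
  endpoint, and the trail is then rerouted along the directed path to that endpoint.\<close>

lemma active_reach_step:
  assumes acyc: "acyclic E"
    and reach: "active_reach E Z i v ((a, v) \<in> E)" and "adj E v u"
    and active: "if (a, v) \<in> E \<and> (u, v) \<in> E then (\<exists>w\<in>S. (v, w) \<in> E\<^sup>*) else v \<notin> S"
    and "Z \<subseteq> S"
    and lost: "\<And>v. \<exists>w\<in>S. (v, w) \<in> E\<^sup>* \<Longrightarrow> \<forall>w\<in>Z. (v, w) \<notin> E\<^sup>* \<Longrightarrow>
      (v, i) \<in> E\<^sup>+ \<or> (v, j) \<in> E\<^sup>+"
  shows "active_reach E Z i u ((v, u) \<in> E) \<or> (\<exists>d. active_reach E Z i j d)"
proof (cases "(a, v) \<in> E \<and> (u, v) \<in> E")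
  case True
  hence "(v, u) \<notin> E" using acyclic_edge_asym[OF acyc] by blast
  show ?thesis
  proof (cases "\<exists>w\<in>Z. (v, w) \<in> E\<^sup>*")
    case True
    thus ?thesis using reach \<open>(v, u) \<notin> E\<close> \<open>(a, v) \<in> E \<and> (u, v) \<in> E\<close>
      by (auto intro: active_reach.collider)
  next
    case False
    hence "(v, i) \<in> E\<^sup>+ \<or> (v, j) \<in> E\<^sup>+" using lost active \<open>(a, v) \<in> E \<and> (u, v) \<in> E\<close> by auto
    moreover have "\<forall>x. (v, x) \<in> E\<^sup>* \<longrightarrow> x \<notin> Z" using False by blast
    ultimately show ?thesis
      using active_reach_ancestor[of v i E Z] active_reach_descendant[of v j E Z i] reach
        \<open>(v, u) \<notin> E\<close> \<open>(a, v) \<in> E \<and> (u, v) \<in> E\<close>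
      by (auto intro: active_reach.backward)
  qed
next
  case False
  hence "v \<notin> Z" using active \<open>Z \<subseteq> S\<close> by auto
  show ?thesis
  proof (cases "(v, u) \<in> E")
    case True
    thus ?thesis using reach \<open>v \<notin> Z\<close> by (auto intro: active_reach.forward)
  next
    case False
    hence "(u, v) \<in> E" "(a, v) \<notin> E"
      using \<open>adj E v u\<close> \<open>\<not> ((a, v) \<in> E \<and> (u, v) \<in> E)\<close> by (auto simp: adj_def)
    thus ?thesis using reach \<open>v \<notin> Z\<close> False by (auto intro: active_reach.backward)
  qed
qed

lemma active_reach_along_active_walk:
  assumes acyc: "acyclic E"
    and walk: "active_walk E S f n" and "f 0 = i" and "Z \<subseteq> S"
    and lost: "\<And>v. \<exists>w\<in>S. (v, w) \<in> E\<^sup>* \<Longrightarrow> \<forall>w\<in>Z. (v, w) \<notin> E\<^sup>* \<Longrightarrow>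
      (v, i) \<in> E\<^sup>+ \<or> (v, j) \<in> E\<^sup>+"
  shows "m + 1 < n \<Longrightarrow>
    active_reach E Z i (f (m + 1)) ((f m, f (m + 1)) \<in> E) \<or> (\<exists>d. active_reach E Z i j d)"
proof (induction m)
  case 0
  have "adj E i (f 1)" using active_walk_adj[OF walk 0] \<open>f 0 = i\<close> by simp
  then consider "(i, f 1) \<in> E" | "(f 1, i) \<in> E" "(i, f 1) \<notin> E"
    using acyclic_edge_asym[OF acyc] unfolding adj_def by blast
  thus ?case using \<open>f 0 = i\<close> by cases (simp_all add: active_reach.out_edge active_reach.in_edge)
next
  case (Suc m)
  have "active_reach E Z i (f (Suc m)) ((f m, f (Suc m)) \<in> E) \<or> (\<exists>d. active_reach E Z i j d)"
    using Suc by simp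
  thus ?case
  proof
    assume reach: "active_reach E Z i (f (Suc m)) ((f m, f (Suc m)) \<in> E)"
    have "adj E (f (Suc m)) (f (Suc m + 1))" using active_walk_adj[OF walk Suc.prems] .
    moreover have "if (f m, f (Suc m)) \<in> E \<and> (f (Suc m + 1), f (Suc m)) \<in> E
        then (\<exists>w\<in>S. (f (Suc m), w) \<in> E\<^sup>*) else f (Suc m) \<notin> S"
      using active_walk_active[OF walk _ Suc.prems] by simp
    ultimately show ?thesis by (rule active_reach_step[OF acyc reach _ _ \<open>Z \<subseteq> S\<close>]) (rule lost)
  qed simp
qed

lemma active_reach_of_active_walk:
  assumes acyc: "acyclic E"
    and walk: "active_walk E S f n" and ends: "f 0 = i" "f (n - 1) = j"
    and "Z \<subseteq> S"
    and lost: "\<And>v. \<exists>w\<in>S. (v, w) \<in> E\<^sup>* \<Longrightarrow> \<forall>w\<in>Z. (v, w) \<notin> E\<^sup>* \<Longrightarrow>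
      (v, i) \<in> E\<^sup>+ \<or> (v, j) \<in> E\<^sup>+"
  shows "\<exists>d. active_reach E Z i j d"
proof -
  have "2 \<le> n" using active_walk_length[OF walk] .
  hence last: "n - 2 + 1 < n" "n - 2 + 1 = n - 1" by auto
  have "active_reach E Z i (f (n - 2 + 1)) ((f (n - 2), f (n - 2 + 1)) \<in> E) \<or>
      (\<exists>d. active_reach E Z i j d)"
    by (rule active_reach_along_active_walk[OF acyc walk ends(1) \<open>Z \<subseteq> S\<close> _ last(1)]) (rule lost)
  thus ?thesis using last(2) ends(2) by auto
qed

lemma d_connected_shrink_conditioning_set:
  assumes acyc: "acyclic E" and dc: "d_connected E i j S" and "Z \<subseteq> S"
    and lost: "\<And>v. \<exists>w\<in>S. (v, w) \<in> E\<^sup>* \<Longrightarrow> \<forall>w\<in>Z. (v, w) \<notin> E\<^sup>* \<Longrightarrow>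
      (v, i) \<in> E\<^sup>+ \<or> (v, j) \<in> E\<^sup>+"
  shows "d_connected E i j Z"
proof -
  obtain f n where f: "active_walk E S f n" "inj_on f {..<n}" "f 0 = i" "f (n - 1) = j"
    using dc d_connected_iff_active_walk by blast
  have "2 \<le> n" using active_walk_length[OF f(1)] .
  hence "i \<noteq> j" using inj_onD[OF f(2), of 0 "n - 1"] f(3,4) by auto
  obtain d where "active_reach E Z i j d"
    using active_reach_of_active_walk[OF acyc f(1,3,4) \<open>Z \<subseteq> S\<close>] lost by blast
  thus ?thesis using d_connected_of_active_reach[OF acyc] \<open>i \<noteq> j\<close> by blast
qed

lemma removed_edges_empty_if_descendant:
  assumes acyc: "acyclic E" and "(k, w) \<in> E\<^sup>+" "w \<in> V"
  shows "removed_edges E V k = {}"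
proof -
  have "e \<in> moral_edges E (V - {k})"
    if e: "e \<in> moral_edges E V" "e \<subseteq> V - {k}" for e
  proof -
    obtain i j where ij: "e = {i, j}" "i \<in> V" "j \<in> V" "i \<noteq> j" "d_connected E i j (V - {i, j})"
      using e(1) by (auto simp: moral_edges_def)
    have "i \<noteq> k" "j \<noteq> k" using e(2) ij(1) by auto
    have lost: "(v, i) \<in> E\<^sup>+ \<or> (v, j) \<in> E\<^sup>+"
      if "\<exists>w\<in>V - {i, j}. (v, w) \<in> E\<^sup>*" "\<forall>w\<in>V - {k} - {i, j}. (v, w) \<notin> E\<^sup>*" for v
    proof -
      have "(v, k) \<in> E\<^sup>*" using that by blast
      hence "(v, w) \<in> E\<^sup>+" using \<open>(k, w) \<in> E\<^sup>+\<close> by (rule rtrancl_trancl_trancl)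
      moreover have "w \<noteq> k" using \<open>(k, w) \<in> E\<^sup>+\<close> acyc by (auto simp: acyclic_def)
      moreover have "w \<notin> V - {k} - {i, j}" using that(2) \<open>(v, w) \<in> E\<^sup>+\<close> by (blast dest: trancl_into_rtrancl)
      ultimately show ?thesis using \<open>w \<in> V\<close> by blast
    qed
    have "d_connected E i j (V - {k} - {i, j})"
      by (rule d_connected_shrink_conditioning_set[OF acyc ij(5)]) (blast, fact lost)
    thus ?thesis using ij(1-4) \<open>i \<noteq> k\<close> \<open>j \<noteq> k\<close> unfolding moral_edges_def by blast
  qed
  thus ?thesis unfolding removed_edges_def induced_edges_def by blast
qed

theorem proposition2:
  fixes p :: nat and E :: "(nat \<times> nat) set" and V :: "nat set" and k :: nat
  assumes "is_dag p E"
    and "V \<subseteq> {1..p}"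
    and "k \<in> V"
    and "removal_score E V k > 0"
  shows "k \<in> Maximal E V"
proof (rule ccontr)
  assume "k \<notin> Maximal E V"
  then obtain w where "(k, w) \<in> E\<^sup>+" "w \<in> V"
    using assms(3) by (auto simp: Maximal_def descendants_def)
  moreover have "acyclic E" using assms(1) by (simp add: is_dag_def)
  ultimately have "removed_edges E V k = {}" by (metis removed_edges_empty_if_descendant)
  thus False using assms(4) by (simp add: removal_score_def)
qed

end
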